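(* Let $G$ be a finite abstract simplicial complex with connection matrix $L$. Then $\mathrm{str}(L^{-1})=\chi(G)$, where $\mathrm{str}(M)=\sum_{x\in G}\omega(x)M(x,x)$.
   Context: A finite abstract simplicial complex $G$ is a finite set of non-empty finite sets closed under taking non-empty subsets. $\omega(x)=(-1)^{|x|-1}$, $\chi(G)=\sum_{x\in G}\omega(x)$. The connection matrix $L$ is indexed by simplices with $L(x,y)=1$ if $x\cap y\neq\emptyset$ and $0$ otherwise; it is invertible. *)

theory Defs
  imports Complex_Main
begin

definition simplicial_complex :: "'a set set \<Rightarrow> bool" where
  "simplicial_complex G \<longleftrightarrow> finite G \<and> (\<forall>x\<in>G. finite x \<and> x \<noteq> {}) \<and>
     (\<forall>x\<in>G. \<forall>y. y \<subseteq> x \<and> y \<noteq> {} \<longrightarrow> y \<in> G)"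

definition omega :: "'a set \<Rightarrow> real" where
  "omega x = (-1) ^ (card x - 1)"

definition euler_char :: "'a set set \<Rightarrow> real" where
  "euler_char G = (\<Sum>x\<in>G. omega x)"

text \<open>Matrices indexed by simplices of G are functions G \<times> G \<rightarrow> real (entries
outside G are irrelevant / taken to be 0).\<close>
definition connection_matrix :: "'a set set \<Rightarrow> 'a set \<Rightarrow> 'a set \<Rightarrow> real" where
  "connection_matrix G x y = (if x \<in> G \<and> y \<in> G \<and> x \<inter> y \<noteq> {} then 1 else 0)"

definition is_inverse_on :: "'b set \<Rightarrow> ('b \<Rightarrow> 'b \<Rightarrow> real) \<Rightarrow> ('b \<Rightarrow> 'b \<Rightarrow> real) \<Rightarrow> bool" where
  "is_inverse_on G L M \<longleftrightarrow>
     (\<forall>x\<in>G. \<forall>z\<in>G. (\<Sum>y\<in>G. L x y * M y z) = (if x = z then 1 else 0)) \<and>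
     (\<forall>x\<in>G. \<forall>z\<in>G. (\<Sum>y\<in>G. M x y * L y z) = (if x = z then 1 else 0)) \<and>
     (\<forall>x z. x \<notin> G \<or> z \<notin> G \<longrightarrow> M x z = 0)"

definition inverse_on :: "'b set \<Rightarrow> ('b \<Rightarrow> 'b \<Rightarrow> real) \<Rightarrow> ('b \<Rightarrow> 'b \<Rightarrow> real)" where
  "inverse_on G L = (THE M. is_inverse_on G L M)"

definition supertrace :: "'a set set \<Rightarrow> ('a set \<Rightarrow> 'a set \<Rightarrow> real) \<Rightarrow> real" where
  "supertrace G M = (\<Sum>x\<in>G. omega x * M x x)"

end

(*
  Write Z x y = [x <= y] for the incidence matrix of the face poset and D for the diagonal
  matrix of the signs omega. Since the non-empty subsets of a simplex have omega-sum 1,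
  L x y = sum of omega v over the common faces v of x and y, i.e. L = Z^T D Z; Moebius
  inversion (the omega-sum over an interval v <= x <= w is omega v [v = w]) gives
  Z^-1 = D Z D, hence L^-1 = D Z D Z^T D, whose diagonal entry at x is the omega-sum over
  the simplices containing x. In the supertrace, exchanging the two sums makes every
  simplex y contribute omega y times the omega-sum of its faces, which is omega y.
*)
theory Submission
  imports Defs
begin

lemma sum_minus_one_power_interval:
  assumes "finite w" "v \<subseteq> w"
  shows "(\<Sum>x | v \<subseteq> x \<and> x \<subseteq> w. (-1::real) ^ card x) = (if v = w then (-1) ^ card v else 0)"
proof (cases "v = w")
  case True
  then have "{x. v \<subseteq> x \<and> x \<subseteq> w} = {v}" by auto
  then show ?thesis using True by simp
next
  case False
  then have "v \<subset> w" using assms(2) by blast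
  have "{x. v \<subseteq> x \<and> x \<subseteq> w} \<subseteq> Pow w" by auto
  then have "finite {x. v \<subseteq> x \<and> x \<subseteq> w}" using assms(1) finite_subset by blast
  then have "(\<Sum>x | v \<subseteq> x \<and> x \<subseteq> w. (-1::real) ^ card x) = 0"
    using card_subsupersets_even_odd[OF assms(1) \<open>v \<subset> w\<close>]
    by (intro sum_alternating_cancels) (simp_all add: conj_ac)
  then show ?thesis using False by simp
qed

lemma omega_eq_minus_one_power: "finite x \<Longrightarrow> x \<noteq> {} \<Longrightarrow> omega x = - ((-1) ^ card x)"
  unfolding omega_def by (cases "card x") auto

lemma omega_mult_self [simp]: "omega x * omega x = 1"
  unfolding omega_def by (simp flip: power_add)

lemma simplicial_complex_subset_mem:
  "simplicial_complex G \<Longrightarrow> w \<in> G \<Longrightarrow> y \<subseteq> w \<Longrightarrow> y \<noteq> {} \<Longrightarrow> y \<in> G"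
  unfolding simplicial_complex_def by blast

lemma simplicial_complex_finite_mem: "simplicial_complex G \<Longrightarrow> w \<in> G \<Longrightarrow> finite w"
  unfolding simplicial_complex_def by blast

lemma simplicial_complex_nonempty_mem: "simplicial_complex G \<Longrightarrow> w \<in> G \<Longrightarrow> w \<noteq> {}"
  unfolding simplicial_complex_def by blast

lemma simplicial_complex_finite: "simplicial_complex G \<Longrightarrow> finite G"
  unfolding simplicial_complex_def by blast

lemma sum_omega_between:
  assumes G: "simplicial_complex G" and "v \<in> G" "w \<in> G"
  shows "(\<Sum>x | x \<in> G \<and> v \<subseteq> x \<and> x \<subseteq> w. omega x) = (if v = w then omega v else 0)"
proof (cases "v \<subseteq> w")
  case True
  have "finite w" "v \<noteq> {}"
    using assms simplicial_complex_finite_mem simplicial_complex_nonempty_mem by auto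
  have between: "{x. x \<in> G \<and> v \<subseteq> x \<and> x \<subseteq> w} = {x. v \<subseteq> x \<and> x \<subseteq> w}"
    using simplicial_complex_subset_mem[OF G \<open>w \<in> G\<close>] \<open>v \<noteq> {}\<close> by blast
  have "(\<Sum>x | v \<subseteq> x \<and> x \<subseteq> w. omega x) = (\<Sum>x | v \<subseteq> x \<and> x \<subseteq> w. - ((-1) ^ card x))"
    using \<open>finite w\<close> \<open>v \<noteq> {}\<close>
    by (intro sum.cong refl omega_eq_minus_one_power) (auto dest: finite_subset)
  also have "\<dots> = (if v = w then omega v else 0)"
    using True \<open>finite w\<close> \<open>v \<noteq> {}\<close>
    by (simp add: sum_negf sum_minus_one_power_interval omega_eq_minus_one_power)
  finally show ?thesis unfolding between .
next
  case False
  then have "{x. x \<in> G \<and> v \<subseteq> x \<and> x \<subseteq> w} = {}" by blast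
  then show ?thesis using False by (auto simp del: Collect_empty_eq)
qed

lemma sum_omega_faces:
  assumes G: "simplicial_complex G" and "w \<in> G" "u \<subseteq> w"
  shows "(\<Sum>y | y \<in> G \<and> y \<subseteq> u. omega y) = (if u = {} then 0 else 1)"
proof -
  have "finite u"
    using simplicial_complex_finite_mem[OF G \<open>w \<in> G\<close>] \<open>u \<subseteq> w\<close> by (rule finite_subset[rotated])
  have faces: "{y. y \<in> G \<and> y \<subseteq> u} = {y. {} \<subseteq> y \<and> y \<subseteq> u} - {{}}"
    using simplicial_complex_subset_mem[OF G \<open>w \<in> G\<close>] simplicial_complex_nonempty_mem[OF G]
      \<open>u \<subseteq> w\<close> by auto
  have "(\<Sum>y \<in> {y. {} \<subseteq> y \<and> y \<subseteq> u} - {{}}. omega y)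
      = (\<Sum>y \<in> {y. {} \<subseteq> y \<and> y \<subseteq> u} - {{}}. - ((-1) ^ card y))"
    using \<open>finite u\<close> by (intro sum.cong refl omega_eq_minus_one_power) (auto dest: finite_subset)
  also have "\<dots> = (\<Sum>y | {} \<subseteq> y \<and> y \<subseteq> u. - ((-1) ^ card y)) + 1"
    using \<open>finite u\<close> by (subst sum_diff1) auto
  also have "\<dots> = (if u = {} then 0 else 1)"
    using sum_minus_one_power_interval[OF \<open>finite u\<close>, of "{}"] by (simp add: sum_negf)
  finally show ?thesis unfolding faces .
qed

lemma sum_omega_faces_meeting:
  assumes G: "simplicial_complex G" and "w \<in> G"
  shows "(\<Sum>y | y \<in> G \<and> y \<subseteq> w \<and> y \<inter> x \<noteq> {}. omega y) = (if w \<subseteq> x then 1 else 0)"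
proof -
  have "finite G" using G by (rule simplicial_complex_finite)
  have split: "{y. y \<in> G \<and> y \<subseteq> w} = {y. y \<in> G \<and> y \<subseteq> w \<and> y \<inter> x \<noteq> {}} \<union> {y. y \<in> G \<and> y \<subseteq> w - x}"
    by blast
  have "(\<Sum>y | y \<in> G \<and> y \<subseteq> w. omega y)
      = (\<Sum>y | y \<in> G \<and> y \<subseteq> w \<and> y \<inter> x \<noteq> {}. omega y) + (\<Sum>y | y \<in> G \<and> y \<subseteq> w - x. omega y)"
    unfolding split using \<open>finite G\<close> by (intro sum.union_disjoint) auto
  then show ?thesis
    using sum_omega_faces[OF G \<open>w \<in> G\<close>, of w] sum_omega_faces[OF G \<open>w \<in> G\<close>, of "w - x"]
      simplicial_complex_nonempty_mem[OF G \<open>w \<in> G\<close>]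
    by (cases "w \<subseteq> x") auto
qed

definition connection_inverse :: "'a set set \<Rightarrow> 'a set \<Rightarrow> 'a set \<Rightarrow> real" where
  "connection_inverse G x z =
     (if x \<in> G \<and> z \<in> G then omega x * omega z * (\<Sum>y | y \<in> G \<and> x \<union> z \<subseteq> y. omega y) else 0)"

lemma connection_matrix_commute: "connection_matrix G x y = connection_matrix G y x"
  by (auto simp: connection_matrix_def)

lemma connection_inverse_commute: "connection_inverse G x y = connection_inverse G y x"
  by (simp add: connection_inverse_def Un_commute mult.commute)

lemma connection_inverse_diagonal:
  "x \<in> G \<Longrightarrow> connection_inverse G x x = (\<Sum>y | y \<in> G \<and> x \<subseteq> y. omega y)"
  by (simp add: connection_inverse_def)

lemma connection_matrix_mult_connection_inverse:
  assumes G: "simplicial_complex G" and "x \<in> G" "z \<in> G"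
  shows "(\<Sum>y\<in>G. connection_matrix G x y * connection_inverse G y z) = (if x = z then 1 else 0)"
proof -
  have "finite G" using G by (rule simplicial_complex_finite)
  have "(\<Sum>y\<in>G. connection_matrix G x y * connection_inverse G y z)
      = (\<Sum>y\<in>G. if x \<inter> y \<noteq> {} then connection_inverse G y z else 0)"
    using \<open>x \<in> G\<close> by (intro sum.cong) (auto simp: connection_matrix_def)
  also have "\<dots> = (\<Sum>y | y \<in> G \<and> x \<inter> y \<noteq> {}. connection_inverse G y z)"
    using \<open>finite G\<close> by (simp add: sum.inter_filter)
  also have "\<dots> = (\<Sum>y | y \<in> G \<and> x \<inter> y \<noteq> {}. \<Sum>w | w \<in> G \<and> y \<union> z \<subseteq> w. omega z * omega w * omega y)"
    using \<open>z \<in> G\<close> by (intro sum.cong refl) (simp add: connection_inverse_def sum_distrib_left mult_ac)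
  also have "\<dots> = (\<Sum>w\<in>G. \<Sum>y | y \<in> G \<and> x \<inter> y \<noteq> {} \<and> y \<union> z \<subseteq> w. omega z * omega w * omega y)"
    using \<open>finite G\<close> by (subst sum.swap_restrict) auto
  also have "\<dots> = (\<Sum>w\<in>G. if z \<subseteq> w \<and> w \<subseteq> x then omega z * omega w else 0)"
  proof (rule sum.cong[OF refl])
    fix w assume "w \<in> G"
    show "(\<Sum>y | y \<in> G \<and> x \<inter> y \<noteq> {} \<and> y \<union> z \<subseteq> w. omega z * omega w * omega y)
        = (if z \<subseteq> w \<and> w \<subseteq> x then omega z * omega w else 0)"
    proof (cases "z \<subseteq> w")
      case True
      then have "{y. y \<in> G \<and> x \<inter> y \<noteq> {} \<and> y \<union> z \<subseteq> w} = {y. y \<in> G \<and> y \<subseteq> w \<and> y \<inter> x \<noteq> {}}"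
        by blast
      then show ?thesis
        using True sum_omega_faces_meeting[OF G \<open>w \<in> G\<close>, of x] by (simp flip: sum_distrib_left)
    next
      case False
      then have "{y. y \<in> G \<and> x \<inter> y \<noteq> {} \<and> y \<union> z \<subseteq> w} = {}"
        by blast
      then show ?thesis using False by (auto simp del: Collect_empty_eq)
    qed
  qed
  also have "\<dots> = omega z * (\<Sum>w | w \<in> G \<and> z \<subseteq> w \<and> w \<subseteq> x. omega w)"
    using \<open>finite G\<close> by (simp add: sum.inter_filter sum_distrib_left) (intro sum.cong; simp)
  also have "\<dots> = (if x = z then 1 else 0)"
    using sum_omega_between[OF G \<open>z \<in> G\<close> \<open>x \<in> G\<close>] by auto
  finally show ?thesis .
qed

lemma is_inverse_on_connection_inverse:
  assumes G: "simplicial_complex G"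
  shows "is_inverse_on G (connection_matrix G) (connection_inverse G)"
  unfolding is_inverse_on_def
proof (intro conjI ballI allI impI)
  fix x z assume "x \<in> G" "z \<in> G"
  show "(\<Sum>y\<in>G. connection_matrix G x y * connection_inverse G y z) = (if x = z then 1 else 0)"
    using connection_matrix_mult_connection_inverse[OF G \<open>x \<in> G\<close> \<open>z \<in> G\<close>] .
  show "(\<Sum>y\<in>G. connection_inverse G x y * connection_matrix G y z) = (if x = z then 1 else 0)"
    using connection_matrix_mult_connection_inverse[OF G \<open>z \<in> G\<close> \<open>x \<in> G\<close>]
    by (simp add: connection_matrix_commute connection_inverse_commute mult.commute eq_commute)
next
  fix x z :: "'a set" assume "x \<notin> G \<or> z \<notin> G"
  then show "connection_inverse G x z = 0" by (auto simp: connection_inverse_def)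
qed

lemma is_inverse_on_unique:
  assumes "finite G" "is_inverse_on G L M" "is_inverse_on G L M'"
  shows "M = M'"
proof (intro ext)
  fix x z
  show "M x z = M' x z"
  proof (cases "x \<in> G \<and> z \<in> G")
    case True
    have L_M': "(\<Sum>w\<in>G. L y w * M' w z) = (if y = z then 1 else 0)" if "y \<in> G" for y
      using assms(3) True that unfolding is_inverse_on_def by blast
    have M_L: "(\<Sum>y\<in>G. M x y * L y w) = (if x = w then 1 else 0)" if "w \<in> G" for w
      using assms(2) True that unfolding is_inverse_on_def by blast
    have "M x z = (\<Sum>y\<in>G. if y = z then M x y else 0)"
      using True assms(1) by simp
    also have "\<dots> = (\<Sum>y\<in>G. M x y * (\<Sum>w\<in>G. L y w * M' w z))"
      using L_M' by (intro sum.cong) auto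
    also have "\<dots> = (\<Sum>y\<in>G. \<Sum>w\<in>G. M x y * L y w * M' w z)"
      by (simp add: sum_distrib_left mult.assoc)
    also have "\<dots> = (\<Sum>w\<in>G. (\<Sum>y\<in>G. M x y * L y w) * M' w z)"
      by (subst sum.swap) (simp add: sum_distrib_right)
    also have "\<dots> = (\<Sum>w\<in>G. if x = w then M' w z else 0)"
      using M_L by (intro sum.cong) auto
    also have "\<dots> = M' x z"
      using True assms(1) by simp
    finally show ?thesis .
  next
    case False
    then show ?thesis using assms(2,3) unfolding is_inverse_on_def by auto
  qed
qed

lemma inverse_on_eqI: "finite G \<Longrightarrow> is_inverse_on G L M \<Longrightarrow> inverse_on G L = M"
  unfolding inverse_on_def by (blast intro: the_equality is_inverse_on_unique)

theorem mainTheorem11: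
  fixes G :: "'a set set"
  assumes "simplicial_complex G"
  shows "supertrace G (inverse_on G (connection_matrix G)) = euler_char G"
proof -
  have "finite G" using assms by (rule simplicial_complex_finite)
  have "supertrace G (inverse_on G (connection_matrix G))
      = (\<Sum>x\<in>G. \<Sum>y | y \<in> G \<and> x \<subseteq> y. omega x * omega y)"
    unfolding inverse_on_eqI[OF \<open>finite G\<close> is_inverse_on_connection_inverse[OF assms]] supertrace_def
    by (simp add: connection_inverse_diagonal sum_distrib_left)
  also have "\<dots> = (\<Sum>y\<in>G. \<Sum>x | x \<in> G \<and> x \<subseteq> y. omega x * omega y)"
    by (rule sum.swap_restrict[OF \<open>finite G\<close> \<open>finite G\<close>])
  also have "\<dots> = (\<Sum>y\<in>G. omega y)"
    using sum_omega_faces[OF assms] simplicial_complex_nonempty_mem[OF assms]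
    by (intro sum.cong) (simp_all flip: sum_distrib_right)
  finally show ?thesis unfolding euler_char_def .
qed

end
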